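(* Let $(X,d)$ be a Cantor space. Then there exists $f\in\mathcal{H}(X)$ which has the continuous shadowing property but is not topologically stable.
   Context: A Cantor space is a compact metric space without isolated points that is totally disconnected. $\mathcal{H}(X)$ is the set of homeomorphisms; $d_{C^0}(f,g)=\sup_x d(f(x),g(x))$; $D(f,g)=\max\{d_{C^0}(f,g),d_{C^0}(f^{-1},g^{-1})\}$. $f$ is topologically stable if for every $\epsilon>0$ there is $\delta>0$ such that for every $g\in\mathcal{H}(X)$ with $D(f,g)<\delta$ there is a continuous $h:X\to X$ with $d_{C^0}(h,\mathrm{id}_X)<\epsilon$ and $h\circ g=f\circ h$. With $\tilde d(x,y)=\sup_{i\in\mathbb{Z}}2^{-|i|}d(x_i,y_i)$ on $X^{\mathbb{Z}}$ and $P(f,\delta)$ the set of $(x_i)_{i\in\mathbb{Z}}$ with $d(f(x_i),x_{i+1})\le\delta$ for all $i$, $f$ has the continuous shadowing property if for every $\epsilon>0$ there are $\delta>0$ and a continuous $r:P(f,\delta)\to X$ with $d(f^i(r(x)),x_i)\le\epsilon$ for all $x\in P(f,\delta)$, $i\in\mathbb{Z}$. *)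

theory Defs
  imports "HOL-Analysis.Analysis"
begin

definition totally_disconnected :: "'a::metric_space set \<Rightarrow> bool" where
  "totally_disconnected X \<longleftrightarrow> (\<forall>S. S \<subseteq> X \<and> connected S \<longrightarrow> (\<exists>a. S \<subseteq> {a}))"

definition cantor_space :: "'a::metric_space set \<Rightarrow> bool" where
  "cantor_space X \<longleftrightarrow> X \<noteq> {} \<and> compact X \<and> (\<forall>x\<in>X. x islimpt X) \<and> totally_disconnected X"

text \<open>Homeomorphisms of X (values outside X are irrelevant).\<close>
definition homeos :: "'a::metric_space set \<Rightarrow> ('a \<Rightarrow> 'a) set" where
  "homeos X = {f. \<exists>g. homeomorphism X X f g}"

definition dC0 :: "'a::metric_space set \<Rightarrow> ('a \<Rightarrow> 'a) \<Rightarrow> ('a \<Rightarrow> 'a) \<Rightarrow> real" where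
  "dC0 X f g = (SUP x\<in>X. dist (f x) (g x))"

definition Dhom :: "'a::metric_space set \<Rightarrow> ('a \<Rightarrow> 'a) \<Rightarrow> ('a \<Rightarrow> 'a) \<Rightarrow> real" where
  "Dhom X f g = max (dC0 X f g) (dC0 X (inv_into X f) (inv_into X g))"

definition topologically_stable :: "'a::metric_space set \<Rightarrow> ('a \<Rightarrow> 'a) \<Rightarrow> bool" where
  "topologically_stable X f \<longleftrightarrow>
     (\<forall>\<epsilon>>0. \<exists>\<delta>>0. \<forall>g\<in>homeos X. Dhom X f g < \<delta> \<longrightarrow>
        (\<exists>h. continuous_on X h \<and> h ` X \<subseteq> X \<and> dC0 X h id < \<epsilon> \<and>
             (\<forall>x\<in>X. h (g x) = f (h x))))"

definition iter_int :: "'a set \<Rightarrow> ('a \<Rightarrow> 'a) \<Rightarrow> int \<Rightarrow> 'a \<Rightarrow> 'a" where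
  "iter_int X f i = (if 0 \<le> i then f ^^ nat i else inv_into X f ^^ nat (- i))"

definition dtilde :: "(int \<Rightarrow> 'a::metric_space) \<Rightarrow> (int \<Rightarrow> 'a) \<Rightarrow> real" where
  "dtilde x y = (SUP i. (1/2) ^ nat \<bar>i\<bar> * dist (x i) (y i))"

definition pseudo_orbits :: "'a::metric_space set \<Rightarrow> ('a \<Rightarrow> 'a) \<Rightarrow> real \<Rightarrow> (int \<Rightarrow> 'a) set" where
  "pseudo_orbits X f \<delta> = {x. (\<forall>i. x i \<in> X) \<and> (\<forall>i. dist (f (x i)) (x (i + 1)) \<le> \<delta>)}"

definition continuous_shadowing :: "'a::metric_space set \<Rightarrow> ('a \<Rightarrow> 'a) \<Rightarrow> bool" where
  "continuous_shadowing X f \<longleftrightarrow>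
     (\<forall>\<epsilon>>0. \<exists>\<delta>>0. \<exists>r. (\<forall>x\<in>pseudo_orbits X f \<delta>. r x \<in> X) \<and>
        (\<forall>x\<in>pseudo_orbits X f \<delta>. \<forall>e>0. \<exists>\<eta>>0. \<forall>y\<in>pseudo_orbits X f \<delta>.
            dtilde x y < \<eta> \<longrightarrow> dist (r x) (r y) < e) \<and>
        (\<forall>x\<in>pseudo_orbits X f \<delta>. \<forall>i. dist (iter_int X f i (r x)) (x i) \<le> \<epsilon>))"

end

theory Submission
  imports Defs
begin

text \<open>Coding points by the branches of a binary tree of nonempty clopen sets identifies a
  Cantor space \<open>X\<close> with \<open>2\<^sup>\<nat>\<close> so that two points are close exactly when their codes share a long
  prefix. Transport the dyadic odometer (adding one with carry) to \<open>X\<close>. It is an isometry of the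
  prefix ultrametric, so a pseudo-orbit with small jumps is shadowed by the orbit of its own
  initial point, which depends continuously on the pseudo-orbit. On the other hand the odometer
  has no periodic points, whereas acting only on the first \<open>N\<close> digits yields arbitrarily close
  homeomorphisms of period \<open>2\<^sup>N\<close>; a semiconjugacy from such a perturbation to the odometer
  would map a periodic point to a periodic point, so the odometer is not topologically stable.\<close>

section \<open>Clopen sets in a Cantor space\<close>

definition clopen_in :: "'a::topological_space set \<Rightarrow> 'a set \<Rightarrow> bool" where
  "clopen_in X U \<longleftrightarrow> closedin (top_of_set X) U \<and> openin (top_of_set X) U"

lemma clopen_in_Int: "clopen_in X A \<Longrightarrow> clopen_in X B \<Longrightarrow> clopen_in X (A \<inter> B)"
  by (auto simp: clopen_in_def)

lemma clopen_in_Diff: "clopen_in X A \<Longrightarrow> clopen_in X B \<Longrightarrow> clopen_in X (A - B)"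
  by (auto simp: clopen_in_def)

lemma cantor_space_clopen_nhd:
  fixes X :: "'a::metric_space set"
  assumes "cantor_space X" "x \<in> X" "e > 0"
  obtains U where "clopen_in X U" "x \<in> U" "U \<subseteq> ball x e"
proof -
  have "compact X" "totally_disconnected X"
    using assms(1) by (auto simp: cantor_space_def)
  let ?C = "connected_component_of_set (top_of_set X) x"
  have "?C \<subseteq> X" "connected ?C"
    using connectedin_connected_component_of[of "top_of_set X" x] by (simp_all add: connectedin_subtopology)
  then obtain a where "?C \<subseteq> {a}"
    using \<open>totally_disconnected X\<close> unfolding totally_disconnected_def by blast
  moreover have "x \<in> ?C"
    using assms(2) by (simp add: connected_component_of_refl)
  ultimately have "?C = {x}"
    by blast
  then have "{x} \<in> connected_components_of (top_of_set X)"
    using assms(2) unfolding connected_components_of_def by force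
  moreover have "locally_compact_space (top_of_set X)"
    by (simp add: \<open>compact X\<close> compact_imp_locally_compact_space compact_space_subtopology)
  moreover have "openin (top_of_set X) (X \<inter> ball x e)"
    by (simp add: openin_open_Int)
  ultimately obtain U V where UV: "openin (top_of_set X) U" "openin (top_of_set X) V" "disjnt U V"
      "U \<union> V = X" "x \<in> U" "U \<subseteq> X \<inter> ball x e"
    using wilder_locally_compact_component_thm[of "top_of_set X" "{x}" "X \<inter> ball x e"] assms(2,3)
    by (auto simp: Hausdorff_space_subtopology)
  have "U = X - V"
    using UV(3,4) by (auto simp: disjnt_def)
  with UV show thesis
    by (intro that) (auto simp: clopen_in_def)
qed

lemma cantor_space_clopen_split:
  fixes X :: "'a::metric_space set"
  assumes "cantor_space X" "clopen_in X C" "C \<noteq> {}"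
  shows "\<exists>A. clopen_in X A \<and> A \<subseteq> C \<and> A \<noteq> {} \<and> C - A \<noteq> {}"
proof -
  obtain x where x: "x \<in> C"
    using assms(3) by auto
  obtain T where T: "open T" "C = X \<inter> T"
    using assms(2) by (auto simp: clopen_in_def openin_open)
  obtain r where r: "r > 0" "ball x r \<subseteq> T"
    using T x by (meson IntD2 open_contains_ball)
  have "x islimpt X"
    using assms(1) x T by (auto simp: cantor_space_def)
  then obtain y where y: "y \<in> X" "y \<noteq> x" "dist y x < r"
    using r(1) by (meson islimpt_approachable)
  then have "y \<in> C"
    using r T by (auto simp: dist_commute)
  obtain U where U: "clopen_in X U" "x \<in> U" "U \<subseteq> ball x (dist x y)"
    using cantor_space_clopen_nhd[OF assms(1), of x "dist x y"] x T y(2) by auto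
  then have "y \<notin> U"
    by auto
  with U x \<open>y \<in> C\<close> show ?thesis
    by (intro exI[of _ "C \<inter> U"]) (auto intro: clopen_in_Int[OF assms(2)])
qed

lemma cantor_space_finite_clopen_cover:
  fixes X :: "'a::metric_space set"
  assumes "cantor_space X" "e > 0"
  shows "\<exists>F. finite F \<and> (\<forall>U\<in>F. clopen_in X U \<and> (\<forall>a\<in>U. \<forall>b\<in>U. dist a b < e)) \<and> X \<subseteq> \<Union>F"
proof -
  have "\<exists>U T. clopen_in X U \<and> x \<in> U \<and> U \<subseteq> ball x (e/2) \<and> open T \<and> U = X \<inter> T"
    if x: "x \<in> X" for x
  proof -
    obtain U where U: "clopen_in X U" "x \<in> U" "U \<subseteq> ball x (e/2)"
      using cantor_space_clopen_nhd[OF assms(1) x half_gt_zero[OF assms(2)]] by blast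
    then obtain T where "open T" "U = X \<inter> T"
      unfolding clopen_in_def openin_open by blast
    with U show ?thesis
      by blast
  qed
  then obtain U T where UT: "\<And>x. x \<in> X \<Longrightarrow>
      clopen_in X (U x) \<and> x \<in> U x \<and> U x \<subseteq> ball x (e/2) \<and> open (T x) \<and> U x = X \<inter> T x"
    by metis
  have "compact X"
    using assms(1) by (simp add: cantor_space_def)
  moreover have "X \<subseteq> (\<Union>x\<in>X. T x)"
    using UT by blast
  ultimately obtain C where C: "C \<subseteq> X" "finite C" "X \<subseteq> (\<Union>x\<in>C. T x)"
    using compactE_image[of X X T] UT by metis
  have small: "dist a b < e" if "x \<in> X" "a \<in> U x" "b \<in> U x" for x a b
  proof -
    have "a \<in> ball x (e/2)" "b \<in> ball x (e/2)"
      using UT that by blast+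
    then show ?thesis
      by (simp add: dist_triangle_half_r)
  qed
  have "\<forall>V\<in>U ` C. clopen_in X V \<and> (\<forall>a\<in>V. \<forall>b\<in>V. dist a b < e)"
    using C(1) UT small by blast
  moreover have "X \<subseteq> \<Union>(U ` C)"
    using C UT by blast
  ultimately show ?thesis
    using C(2) by blast
qed

lemma cantor_space_separating_clopens:
  fixes X :: "'a::metric_space set"
  assumes "cantor_space X"
  obtains W :: "nat \<Rightarrow> 'a set" where "\<And>j. clopen_in X (W j)"
    "\<And>e. e > 0 \<Longrightarrow> \<exists>J. \<forall>a\<in>X. \<forall>b\<in>X. (\<forall>j<J. a \<in> W j \<longleftrightarrow> b \<in> W j) \<longrightarrow> dist a b < e"
proof -
  have "\<forall>m. \<exists>F. finite F \<and> (\<forall>U\<in>F. clopen_in X U \<and> (\<forall>a\<in>U. \<forall>b\<in>U. dist a b < 1 / Suc m))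
      \<and> X \<subseteq> \<Union>F"
    using cantor_space_finite_clopen_cover[OF assms] by simp
  then obtain F where F: "\<And>m. finite (F m)"
    "\<And>m U. U \<in> F m \<Longrightarrow> clopen_in X U \<and> (\<forall>a\<in>U. \<forall>b\<in>U. dist a b < 1 / Suc m)"
    "\<And>m. X \<subseteq> \<Union>(F m)"
    by metis
  define G where "G = (\<Union>m. F m)"
  have "countable G"
    unfolding G_def using F(1) by (simp add: countable_finite)
  moreover have "G \<noteq> {}"
    using F(3)[of 0] assms by (auto simp: G_def cantor_space_def)
  ultimately have range_W: "range (from_nat_into G) = G"
    by (simp add: range_from_nat_into)
  define W where "W = from_nat_into G"
  show thesis
  proof (rule that[of W])
    show "clopen_in X (W j)" for j
      using range_W F(2) by (auto simp: W_def G_def)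
  next
    fix e :: real
    assume "e > 0"
    then obtain m where m: "1 / Suc m < e"
      by (metis nat_approx_posE)
    obtain C where C: "finite C" "F m = W ` C"
      using finite_subset_image[of "F m" W UNIV] F(1) range_W by (auto simp: W_def G_def)
    then obtain J where J: "C \<subseteq> {..<J}"
      using finite_nat_iff_bounded by blast
    have "dist a b < e" if ab: "a \<in> X" "b \<in> X" "\<forall>j<J. a \<in> W j \<longleftrightarrow> b \<in> W j" for a b
    proof -
      obtain j where "j \<in> C" "a \<in> W j"
        using F(3)[of m] C(2) ab(1) by blast
      with ab J have "b \<in> W j"
        by auto
      with \<open>j \<in> C\<close> \<open>a \<in> W j\<close> C(2) F(2) have "dist a b < 1 / Suc m"
        by blast
      with m show ?thesis
        by linarith
    qed
    then show "\<exists>J. \<forall>a\<in>X. \<forall>b\<in>X. (\<forall>j<J. a \<in> W j \<longleftrightarrow> b \<in> W j) \<longrightarrow> dist a b < e"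
      by blast
  qed
qed

section \<open>Coding a Cantor space by binary sequences\<close>

abbreviation agree :: "nat \<Rightarrow> (nat \<Rightarrow> bool) \<Rightarrow> (nat \<Rightarrow> bool) \<Rightarrow> bool" where
  "agree n z w \<equiv> \<forall>k<n. z k = w k"

locale binary_coding =
  fixes X :: "'a::metric_space set" and code :: "'a \<Rightarrow> nat \<Rightarrow> bool"
  assumes bounded: "bounded X"
    and bij: "bij_betw code X UNIV"
    and close_imp_agree: "\<exists>d>0. \<forall>a\<in>X. \<forall>b\<in>X. dist a b < d \<longrightarrow> agree n (code a) (code b)"
    and agree_imp_close: "e > 0 \<Longrightarrow> \<exists>n. \<forall>a\<in>X. \<forall>b\<in>X. agree n (code a) (code b) \<longrightarrow> dist a b < e"

locale clopen_tree =
  fixes X :: "'a::metric_space set" and W :: "nat \<Rightarrow> 'a set"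
  assumes cantor: "cantor_space X"
    and clopen_W: "clopen_in X (W j)"
    and separating: "e > 0 \<Longrightarrow> \<exists>J. \<forall>a\<in>X. \<forall>b\<in>X. (\<forall>j<J. a \<in> W j \<longleftrightarrow> b \<in> W j) \<longrightarrow> dist a b < e"
begin

text \<open>Level \<open>j\<close> of the tree cuts every cell by \<open>W j\<close> if that is a proper cut, and by an
  arbitrary proper clopen subset otherwise; so all cells are nonempty and those of level \<open>n\<close>
  do not meet the boundaries of \<open>W 0, \<dots>, W (n - 1)\<close>.\<close>

definition split_cell :: "nat \<Rightarrow> 'a set \<Rightarrow> 'a set" where
  "split_cell j C = (if C \<inter> W j \<noteq> {} \<and> C - W j \<noteq> {} then C \<inter> W j
     else (SOME A. clopen_in X A \<and> A \<subseteq> C \<and> A \<noteq> {} \<and> C - A \<noteq> {}))"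

definition child_cell :: "nat \<Rightarrow> 'a set \<Rightarrow> bool \<Rightarrow> 'a set" where
  "child_cell j C b = (if b then split_cell j C else C - split_cell j C)"

primrec cell :: "(nat \<Rightarrow> bool) \<Rightarrow> nat \<Rightarrow> 'a set" where
  "cell z 0 = X"
| "cell z (Suc n) = child_cell n (cell z n) (z n)"

primrec cell_of :: "'a \<Rightarrow> nat \<Rightarrow> 'a set" where
  "cell_of x 0 = X"
| "cell_of x (Suc n) = child_cell n (cell_of x n) (x \<in> split_cell n (cell_of x n))"

definition address :: "'a \<Rightarrow> nat \<Rightarrow> bool" where
  "address x n \<longleftrightarrow> x \<in> split_cell n (cell_of x n)"

lemma split_cell_proper_clopen:
  assumes "clopen_in X C" "C \<noteq> {}"
  shows "clopen_in X (split_cell j C) \<and> split_cell j C \<subseteq> C \<and> split_cell j C \<noteq> {}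
    \<and> C - split_cell j C \<noteq> {}"
proof (cases "C \<inter> W j \<noteq> {} \<and> C - W j \<noteq> {}")
  case True
  then show ?thesis
    using clopen_in_Int[OF assms(1) clopen_W] by (auto simp: split_cell_def)
next
  case False
  then have "split_cell j C = (SOME A. clopen_in X A \<and> A \<subseteq> C \<and> A \<noteq> {} \<and> C - A \<noteq> {})"
    unfolding split_cell_def by (rule if_not_P)
  then show ?thesis
    using someI_ex[OF cantor_space_clopen_split[OF cantor assms]] by simp
qed

lemma child_cell_clopen_nonempty:
  assumes "clopen_in X C" "C \<noteq> {}"
  shows "clopen_in X (child_cell j C b) \<and> child_cell j C b \<subseteq> C \<and> child_cell j C b \<noteq> {}"
  using split_cell_proper_clopen[OF assms, of j] clopen_in_Diff[OF assms(1)] by (auto simp: child_cell_def)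

lemma child_cell_W:
  assumes "clopen_in X C" "C \<noteq> {}"
  shows "child_cell j C b \<subseteq> W j \<or> child_cell j C b \<inter> W j = {}"
proof (cases "C \<inter> W j \<noteq> {} \<and> C - W j \<noteq> {}")
  case True
  then show ?thesis
    by (auto simp: child_cell_def split_cell_def)
next
  case False
  then show ?thesis
    using child_cell_clopen_nonempty[OF assms, of j b] by auto
qed

lemma cell_clopen_nonempty: "clopen_in X (cell z n) \<and> cell z n \<noteq> {}"
proof (induction n)
  case 0
  then show ?case
    using cantor by (auto simp: cantor_space_def clopen_in_def)
next
  case (Suc n)
  then show ?case
    using child_cell_clopen_nonempty by simp
qed

lemma cell_antimono: "m \<le> n \<Longrightarrow> cell z n \<subseteq> cell z m"
  by (rule lift_Suc_antimono_le[of "cell z"]) (use child_cell_clopen_nonempty cell_clopen_nonempty in simp_all)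

lemma cell_subset: "cell z n \<subseteq> X"
  using cell_antimono[of 0 n z] by simp

lemma cell_cong: "agree n z w \<Longrightarrow> cell z n = cell w n"
  by (induction n) auto

lemma cell_of_eq_cell: "cell_of x n = cell (address x) n"
  by (induction n) (auto simp: address_def)

lemma mem_cell_address: "x \<in> X \<Longrightarrow> x \<in> cell (address x) n"
  unfolding cell_of_eq_cell[symmetric] by (induction n) (auto simp: child_cell_def)

lemma address_agree: "y \<in> cell z n \<Longrightarrow> agree n (address y) z"
proof (induction n)
  case 0
  then show ?case
    by simp
next
  case (Suc n)
  then have IH: "agree n (address y) z"
    using cell_antimono[of n "Suc n" z] by auto
  then have "cell_of y n = cell z n"
    using cell_cong by (simp add: cell_of_eq_cell)
  then have "address y n \<longleftrightarrow> y \<in> split_cell n (cell z n)"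
    by (simp add: address_def)
  moreover have "y \<in> child_cell n (cell z n) (z n)"
    using Suc.prems by simp
  ultimately have "address y n = z n"
    by (auto simp: child_cell_def split: if_splits)
  with IH show ?case
    using less_Suc_eq by auto
qed

lemma cell_W:
  assumes "y \<in> cell z n" "y' \<in> cell z n" "j < n"
  shows "y \<in> W j \<longleftrightarrow> y' \<in> W j"
proof -
  have "cell z n \<subseteq> cell z (Suc j)"
    using assms(3) by (metis Suc_leI cell_antimono)
  moreover have "cell z (Suc j) \<subseteq> W j \<or> cell z (Suc j) \<inter> W j = {}"
    using child_cell_W cell_clopen_nonempty by simp
  ultimately show ?thesis
    using assms(1,2) by blast
qed

lemma address_agree_imp_close:
  assumes "e > 0"
  shows "\<exists>n. \<forall>a\<in>X. \<forall>b\<in>X. agree n (address a) (address b) \<longrightarrow> dist a b < e"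
proof -
  obtain J where J: "\<forall>a\<in>X. \<forall>b\<in>X. (\<forall>j<J. a \<in> W j \<longleftrightarrow> b \<in> W j) \<longrightarrow> dist a b < e"
    using separating[OF assms] by blast
  have "dist a b < e" if "a \<in> X" "b \<in> X" "agree J (address a) (address b)" for a b
  proof -
    have "a \<in> cell (address a) J" "b \<in> cell (address a) J"
      using mem_cell_address[of a J] mem_cell_address[of b J] cell_cong[OF that(3)] that(1,2)
      by simp_all
    then show ?thesis
      using J that(1,2) cell_W by blast
  qed
  then show ?thesis
    by blast
qed

lemma inj_on_address: "inj_on address X"
proof (rule inj_onI)
  fix a b
  assume "a \<in> X" "b \<in> X" "address a = address b"
  then have "dist a b < e" if "e > 0" for e
    using address_agree_imp_close[OF that] by metis
  then show "a = b"
    using zero_less_dist_iff by blast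
qed

lemma address_surj: "\<exists>x\<in>X. address x = z"
proof -
  have "compact X"
    using cantor by (simp add: cantor_space_def)
  have closed: "\<forall>C\<in>range (cell z). closed C"
    using cell_clopen_nonempty closedin_closed_trans[OF _ compact_imp_closed[OF \<open>compact X\<close>]]
    by (auto simp: clopen_in_def)
  have fip: "X \<inter> \<Inter>B \<noteq> {}" if B: "B \<subseteq> range (cell z)" "finite B" for B
  proof -
    obtain I where I: "finite I" "B = cell z ` I"
      using B by (meson finite_subset_image)
    then obtain N where N: "I \<subseteq> {..<N}"
      using finite_nat_iff_bounded by blast
    have "cell z N \<subseteq> cell z i" if "i \<in> I" for i
      by (rule cell_antimono) (use N that in auto)
    then have "cell z N \<subseteq> X \<inter> \<Inter>B"
      using I(2) cell_subset by blast
    then show ?thesis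
      using cell_clopen_nonempty by blast
  qed
  then have "X \<inter> \<Inter>(range (cell z)) \<noteq> {}"
    using compact_fip[THEN iffD1, OF \<open>compact X\<close>] closed fip by blast
  then obtain x where x: "x \<in> X" "\<And>n. x \<in> cell z n"
    by blast
  have "address x = z"
  proof
    show "address x k = z k" for k
      using address_agree[OF x(2)[of "Suc k"]] by simp
  qed
  with x show ?thesis
    by blast
qed

lemma close_imp_address_agree:
  "\<exists>d>0. \<forall>a\<in>X. \<forall>b\<in>X. dist a b < d \<longrightarrow> agree n (address a) (address b)"
proof -
  have "compact X"
    using cantor by (simp add: cantor_space_def)
  define \<C> where "\<C> = {T. open T \<and> (\<exists>z. X \<inter> T = cell z n)}"
  have cover: "X \<subseteq> \<Union>\<C>"
  proof
    fix x
    assume "x \<in> X"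
    obtain T where "open T" "cell (address x) n = X \<inter> T"
      using cell_clopen_nonempty[of "address x" n] unfolding clopen_in_def openin_open by blast
    with mem_cell_address[OF \<open>x \<in> X\<close>] show "x \<in> \<Union>\<C>"
      unfolding \<C>_def by blast
  qed
  then have "\<C> \<noteq> {}"
    using cantor by (auto simp: cantor_space_def)
  moreover have "open B" if "B \<in> \<C>" for B
    using that by (simp add: \<C>_def)
  ultimately obtain d where d: "d > 0" "\<And>T. T \<subseteq> X \<Longrightarrow> diameter T < d \<Longrightarrow> \<exists>B\<in>\<C>. T \<subseteq> B"
    using Lebesgue_number_lemma[OF \<open>compact X\<close> _ cover] by blast
  have "agree n (address a) (address b)" if ab: "a \<in> X" "b \<in> X" "dist a b < d" for a b
  proof -
    have "diameter {a, b} \<le> dist a b"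
      unfolding diameter_def by (auto simp: dist_commute intro!: cSup_least)
    then obtain B where "B \<in> \<C>" "{a, b} \<subseteq> B"
      using d(2)[of "{a, b}"] ab by force
    then obtain z where "a \<in> cell z n" "b \<in> cell z n"
      using ab(1,2) unfolding \<C>_def by blast
    then show ?thesis
      using address_agree by metis
  qed
  with d(1) show ?thesis
    by blast
qed

lemma binary_coding_address: "binary_coding X address"
proof
  show "bounded X"
    using cantor by (simp add: cantor_space_def compact_imp_bounded)
  show "bij_betw address X UNIV"
    unfolding bij_betw_def using inj_on_address address_surj by (metis UNIV_eq_I imageI)
qed (use close_imp_address_agree address_agree_imp_close in blast)+

end

lemma cantor_space_binary_coding:
  assumes "cantor_space X"
  obtains code where "binary_coding X code"
proof -
  obtain W where "clopen_tree X W"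
    using cantor_space_separating_clopens[OF assms] by (metis clopen_tree.intro assms)
  then show thesis
    using clopen_tree.binary_coding_address that by blast
qed

section \<open>Prefix isometries of binary sequences and the odometer\<close>

definition prefix_preserving :: "((nat \<Rightarrow> bool) \<Rightarrow> nat \<Rightarrow> bool) \<Rightarrow> bool" where
  "prefix_preserving S \<longleftrightarrow> (\<forall>n z w. agree n z w \<longrightarrow> agree n (S z) (S w))"

text \<open>Bijections of \<open>2\<^sup>\<nat>\<close> that preserve prefixes in both directions are exactly the isometries
  of the ultrametric \<open>2\<^sup>-\<^sup>n\<close>, \<open>n\<close> the first digit where two sequences differ.\<close>

definition prefix_isometry :: "((nat \<Rightarrow> bool) \<Rightarrow> nat \<Rightarrow> bool) \<Rightarrow> ((nat \<Rightarrow> bool) \<Rightarrow> nat \<Rightarrow> bool) \<Rightarrow> bool"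
  where "prefix_isometry S S' \<longleftrightarrow> prefix_preserving S \<and> prefix_preserving S'
    \<and> (\<forall>z. S' (S z) = z) \<and> (\<forall>z. S (S' z) = z)"

lemma prefix_preservingD: "prefix_preserving S \<Longrightarrow> agree n z w \<Longrightarrow> agree n (S z) (S w)"
  unfolding prefix_preserving_def by blast

text \<open>Digits are read least significant first, so the odometer adds one with carry: digit \<open>n\<close>
  flips iff all lower digits are \<open>True\<close>.\<close>

definition odometer :: "(nat \<Rightarrow> bool) \<Rightarrow> nat \<Rightarrow> bool" where
  "odometer z n \<longleftrightarrow> z n \<noteq> (\<forall>k<n. z k)"

definition odometer_inv :: "(nat \<Rightarrow> bool) \<Rightarrow> nat \<Rightarrow> bool" where
  "odometer_inv z n \<longleftrightarrow> z n \<noteq> (\<forall>k<n. \<not> z k)"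

definition odometer_upto :: "nat \<Rightarrow> (nat \<Rightarrow> bool) \<Rightarrow> nat \<Rightarrow> bool" where
  "odometer_upto N z n \<longleftrightarrow> (if n < N then odometer z n else z n)"

definition odometer_upto_inv :: "nat \<Rightarrow> (nat \<Rightarrow> bool) \<Rightarrow> nat \<Rightarrow> bool" where
  "odometer_upto_inv N z n \<longleftrightarrow> (if n < N then odometer_inv z n else z n)"

lemma odometer_no_carry: "(\<forall>k<n. \<not> odometer z k) \<longleftrightarrow> (\<forall>k<n. z k)"
proof (induction n)
  case (Suc n)
  show ?case
    unfolding All_less_Suc Suc.IH odometer_def[of z n] by blast
qed simp

lemma odometer_inv_carry: "(\<forall>k<n. odometer_inv z k) \<longleftrightarrow> (\<forall>k<n. \<not> z k)"
proof (induction n)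
  case (Suc n)
  show ?case
    unfolding All_less_Suc Suc.IH odometer_inv_def[of z n] by blast
qed simp

lemma odometer_inv_odometer: "odometer_inv (odometer z) = z"
proof
  fix n
  have "odometer_inv (odometer z) n \<longleftrightarrow> odometer z n \<noteq> (\<forall>k<n. z k)"
    by (simp add: odometer_inv_def odometer_no_carry)
  then show "odometer_inv (odometer z) n = z n"
    unfolding odometer_def by argo
qed

lemma odometer_odometer_inv: "odometer (odometer_inv z) = z"
proof
  fix n
  have "odometer (odometer_inv z) n \<longleftrightarrow> odometer_inv z n \<noteq> (\<forall>k<n. \<not> z k)"
    by (simp add: odometer_def odometer_inv_carry)
  then show "odometer (odometer_inv z) n = z n"
    unfolding odometer_inv_def by argo
qed

lemma odometer_upto_inv_odometer_upto: "odometer_upto_inv N (odometer_upto N z) = z"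
proof
  fix n
  show "odometer_upto_inv N (odometer_upto N z) n = z n"
  proof (cases "n < N")
    case True
    then have "(\<forall>k<n. \<not> odometer_upto N z k) \<longleftrightarrow> (\<forall>k<n. \<not> odometer z k)"
      by (auto simp: odometer_upto_def)
    with True have "odometer_upto_inv N (odometer_upto N z) n \<longleftrightarrow> odometer z n \<noteq> (\<forall>k<n. z k)"
      by (simp add: odometer_upto_inv_def odometer_upto_def odometer_inv_def odometer_no_carry)
    then show ?thesis
      unfolding odometer_def by argo
  qed (simp add: odometer_upto_inv_def odometer_upto_def)
qed

lemma odometer_upto_odometer_upto_inv: "odometer_upto N (odometer_upto_inv N z) = z"
proof
  fix n
  show "odometer_upto N (odometer_upto_inv N z) n = z n"
  proof (cases "n < N")
    case True
    then have "(\<forall>k<n. odometer_upto_inv N z k) \<longleftrightarrow> (\<forall>k<n. odometer_inv z k)"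
      by (auto simp: odometer_upto_inv_def)
    with True have "odometer_upto N (odometer_upto_inv N z) n \<longleftrightarrow> odometer_inv z n \<noteq> (\<forall>k<n. \<not> z k)"
      by (simp add: odometer_upto_inv_def odometer_upto_def odometer_def odometer_inv_carry)
    then show ?thesis
      unfolding odometer_inv_def by argo
  qed (simp add: odometer_upto_inv_def odometer_upto_def)
qed

lemma prefix_isometry_odometer: "prefix_isometry odometer odometer_inv"
proof -
  have "prefix_preserving odometer" "prefix_preserving odometer_inv"
    unfolding prefix_preserving_def odometer_def odometer_inv_def by auto
  then show ?thesis
    by (simp add: prefix_isometry_def odometer_inv_odometer odometer_odometer_inv)
qed

lemma prefix_isometry_odometer_upto: "prefix_isometry (odometer_upto N) (odometer_upto_inv N)"
proof -
  have "prefix_preserving (odometer_upto N)" "prefix_preserving (odometer_upto_inv N)"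
    unfolding prefix_preserving_def odometer_upto_def odometer_upto_inv_def odometer_def
      odometer_inv_def by auto
  then show ?thesis
    by (simp add: prefix_isometry_def odometer_upto_inv_odometer_upto
        odometer_upto_odometer_upto_inv)
qed

definition digits_value :: "nat \<Rightarrow> (nat \<Rightarrow> bool) \<Rightarrow> nat" where
  "digits_value n z = (\<Sum>k<n. if z k then 2 ^ k else 0)"

lemma digits_value_0 [simp]: "digits_value 0 z = 0"
  by (simp add: digits_value_def)

lemma digits_value_Suc: "digits_value (Suc n) z = digits_value n z + (if z n then 2 ^ n else 0)"
  by (simp add: digits_value_def)

lemma digits_value_less: "digits_value n z < 2 ^ n"
  by (induction n) (auto simp: digits_value_Suc)

lemma digits_value_all_True: "(\<forall>k<n. z k) \<Longrightarrow> digits_value n z + 1 = 2 ^ n"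
  by (induction n) (auto simp: digits_value_Suc)

lemma digits_value_cong: "agree n z w \<Longrightarrow> digits_value n z = digits_value n w"
  unfolding digits_value_def by (rule sum.cong) auto

lemma agree_if_digits_value_eq: "digits_value n z = digits_value n w \<Longrightarrow> agree n z w"
proof (induction n)
  case 0
  then show ?case
    by simp
next
  case (Suc n)
  have "z n = w n"
    using Suc.prems digits_value_less[of n z] digits_value_less[of n w]
    by (auto simp: digits_value_Suc split: if_splits)
  with Suc show ?case
    by (auto simp: digits_value_Suc less_Suc_eq)
qed

lemma digits_value_odometer:
  "digits_value n (odometer z) = (if \<forall>k<n. z k then 0 else digits_value n z + 1)"
proof (induction n)
  case (Suc n)
  show ?case
  proof (cases "\<forall>k<n. z k")
    case True
    then show ?thesis
      using Suc.IH digits_value_all_True[of n z]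
      unfolding digits_value_Suc All_less_Suc odometer_def[of z n] by simp
  next
    case False
    then show ?thesis
      using Suc.IH unfolding digits_value_Suc All_less_Suc odometer_def[of z n] by simp
  qed
qed simp

lemma digits_value_odometer_mod: "digits_value n (odometer z) = (digits_value n z + 1) mod 2 ^ n"
proof (cases "\<forall>k<n. z k")
  case True
  then show ?thesis
    using digits_value_all_True[of n z] by (simp add: digits_value_odometer)
next
  case False
  then have "digits_value n (odometer z) = digits_value n z + 1"
    by (simp add: digits_value_odometer)
  with digits_value_less[of n "odometer z"] show ?thesis
    by simp
qed

lemma digits_value_funpow_odometer:
  "digits_value n ((odometer ^^ m) z) = (digits_value n z + m) mod 2 ^ n"
  by (induction m) (simp_all add: digits_value_less digits_value_odometer_mod mod_Suc_eq)

lemma digits_value_funpow_odometer_upto: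
  "digits_value N ((odometer_upto N ^^ m) z) = (digits_value N z + m) mod 2 ^ N"
proof (induction m)
  case (Suc m)
  have "digits_value N (odometer_upto N ((odometer_upto N ^^ m) z))
      = digits_value N (odometer ((odometer_upto N ^^ m) z))"
    by (rule digits_value_cong) (simp add: odometer_upto_def)
  with Suc show ?case
    by (simp add: digits_value_odometer_mod mod_Suc_eq)
qed (simp add: digits_value_less)

lemma odometer_not_periodic:
  assumes "m > 0"
  shows "(odometer ^^ m) z \<noteq> z"
proof
  assume "(odometer ^^ m) z = z"
  then have "(digits_value m z + m) mod 2 ^ m = digits_value m z mod 2 ^ m"
    using digits_value_funpow_odometer[of m m z] digits_value_less[of m z] by simp
  then have "2 ^ m dvd m"
    by (simp add: mod_eq_dvd_iff_nat)
  then show False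
    using nat_dvd_not_less[OF assms less_exp] by blast
qed

lemma odometer_upto_periodic: "(odometer_upto N ^^ 2 ^ N) z = z"
proof
  fix k
  have "digits_value N ((odometer_upto N ^^ 2 ^ N) z) = digits_value N z"
    using digits_value_less[of N z] by (simp add: digits_value_funpow_odometer_upto)
  then have "agree N ((odometer_upto N ^^ 2 ^ N) z) z"
    by (rule agree_if_digits_value_eq)
  moreover have "(odometer_upto N ^^ m) z k = z k" if "N \<le> k" for m
    using that by (induction m) (auto simp: odometer_upto_def)
  ultimately show "(odometer_upto N ^^ 2 ^ N) z k = z k"
    by (cases "k < N") auto
qed

lemma inv_into_homeomorphism:
  assumes "homeomorphism S S f g" "x \<in> S"
  shows "inv_into S f x = g x"
proof (rule inv_into_f_eq)
  show "inj_on f S"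
    using assms(1) by (metis homeomorphism_def inj_on_inverseI)
qed (use assms in \<open>auto simp: homeomorphism_def\<close>)

lemma dC0_le:
  assumes "X \<noteq> {}" "\<And>x. x \<in> X \<Longrightarrow> dist (f x) (g x) \<le> e"
  shows "dC0 X f g \<le> e"
  unfolding dC0_def using assms by (rule cSUP_least)

lemma dist_le_dtilde:
  assumes "bounded X" "\<And>i. x i \<in> X" "\<And>i. y i \<in> X"
  shows "dist (x 0) (y 0) \<le> dtilde x y"
proof -
  obtain B where B: "\<forall>a\<in>X. \<forall>b\<in>X. dist a b \<le> B"
    using assms(1) unfolding bounded_two_points by blast
  have "(1/2) ^ nat \<bar>i\<bar> * dist (x i) (y i) \<le> B" for i
  proof -
    have "(1/2) ^ nat \<bar>i\<bar> * dist (x i) (y i) \<le> dist (x i) (y i)"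
      by (rule mult_left_le_one_le) (auto intro: power_le_one)
    also have "\<dots> \<le> B"
      using B assms(2,3) by blast
    finally show ?thesis .
  qed
  then have "bdd_above (range (\<lambda>i. (1/2) ^ nat \<bar>i\<bar> * dist (x i) (y i)))"
    by (intro bdd_aboveI2)
  from cSUP_upper[OF UNIV_I this, of 0] show ?thesis
    by (simp add: dtilde_def)
qed

lemma funpow_semiconj:
  assumes "\<forall>x\<in>X. h (g x) = f (h x)" "g ` X \<subseteq> X" "x \<in> X"
  shows "h ((g ^^ m) x) = (f ^^ m) (h x)"
proof (induction m)
  case (Suc m)
  have "(g ^^ m) x \<in> X"
    using assms(2,3) by (induction m) auto
  with Suc assms(1) show ?case
    by simp
qed simp

lemma agree_funpow_pseudo_orbit:
  assumes "prefix_isometry S S'" "\<And>j. agree n (S (c j)) (c (j + 1))"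
  shows "agree n ((S ^^ m) (c 0)) (c (int m))" "agree n ((S' ^^ m) (c 0)) (c (- int m))"
proof -
  have pS: "prefix_preserving S" and pS': "prefix_preserving S'" and inv: "\<And>z. S' (S z) = z"
    using assms(1) by (auto simp: prefix_isometry_def)
  show "agree n ((S ^^ m) (c 0)) (c (int m))"
  proof (induction m)
    case (Suc m)
    then have "agree n ((S ^^ Suc m) (c 0)) (S (c (int m)))"
      using prefix_preservingD[OF pS] by simp
    then show ?case
      using assms(2)[of "int m"] by (simp add: add.commute)
  qed simp
  show "agree n ((S' ^^ m) (c 0)) (c (- int m))"
  proof (induction m)
    case (Suc m)
    have "- int (Suc m) + 1 = - int m"
      by simp
    then have "agree n (S (c (- int (Suc m)))) ((S' ^^ m) (c 0))"
      using assms(2)[of "- int (Suc m)"] Suc.IH by simp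
    from prefix_preservingD[OF pS' this] show ?case
      by (auto simp: inv)
  qed simp
qed

context binary_coding
begin

abbreviation decode :: "(nat \<Rightarrow> bool) \<Rightarrow> 'a" where
  "decode \<equiv> inv_into X code"

lemma decode_in: "decode z \<in> X"
  using bij by (simp add: bij_betw_def inv_into_into)

lemma code_decode: "code (decode z) = z"
  using bij by (simp add: bij_betw_inv_into_right)

lemma decode_code: "x \<in> X \<Longrightarrow> decode (code x) = x"
  using bij by (simp add: bij_betw_inv_into_left)

definition induced :: "((nat \<Rightarrow> bool) \<Rightarrow> nat \<Rightarrow> bool) \<Rightarrow> 'a \<Rightarrow> 'a" where
  "induced S x = decode (S (code x))"

lemma induced_in: "induced S x \<in> X"
  by (simp add: induced_def decode_in)

lemma code_induced: "code (induced S x) = S (code x)"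
  by (simp add: induced_def code_decode)

lemma funpow_induced_in: "x \<in> X \<Longrightarrow> (induced S ^^ m) x \<in> X"
  by (induction m) (simp_all add: induced_in)

lemma code_funpow_induced: "code ((induced S ^^ m) x) = (S ^^ m) (code x)"
  by (induction m) (simp_all add: code_induced)

lemma funpow_induced_fixed_iff:
  assumes "x \<in> X"
  shows "(induced S ^^ m) x = x \<longleftrightarrow> (S ^^ m) (code x) = code x"
  using decode_code[OF funpow_induced_in[OF assms]] decode_code[OF assms]
  by (metis code_funpow_induced)

lemma continuous_on_induced:
  assumes "prefix_preserving S"
  shows "continuous_on X (induced S)"
  unfolding continuous_on_iff
proof (intro ballI allI impI)
  fix x and e :: real
  assume "x \<in> X" "e > 0"
  obtain n where n: "\<forall>a\<in>X. \<forall>b\<in>X. agree n (code a) (code b) \<longrightarrow> dist a b < e"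
    using agree_imp_close[OF \<open>e > 0\<close>] by blast
  obtain d where d: "d > 0" "\<forall>a\<in>X. \<forall>b\<in>X. dist a b < d \<longrightarrow> agree n (code a) (code b)"
    using close_imp_agree by blast
  have "dist (induced S y) (induced S x) < e" if "y \<in> X" "dist y x < d" for y
  proof -
    have "agree n (S (code y)) (S (code x))"
      using prefix_preservingD[OF assms] d(2) that \<open>x \<in> X\<close> by blast
    then show ?thesis
      using n induced_in by (simp add: code_induced)
  qed
  with d(1) show "\<exists>d>0. \<forall>y\<in>X. dist y x < d \<longrightarrow> dist (induced S y) (induced S x) < e"
    by blast
qed

lemma homeomorphism_induced:
  assumes "prefix_isometry S S'"
  shows "homeomorphism X X (induced S) (induced S')"
  using assms
  by (intro homeomorphismI continuous_on_induced)
    (auto simp: prefix_isometry_def induced_def decode_in code_decode decode_code)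

lemma iter_int_induced:
  assumes "prefix_isometry S S'" "x \<in> X"
  shows "iter_int X (induced S) i x
    = (if 0 \<le> i then (induced S ^^ nat i) x else (induced S' ^^ nat (- i)) x)"
proof -
  have "(inv_into X (induced S) ^^ m) x = (induced S' ^^ m) x" for m
    by (induction m) (simp_all add: inv_into_homeomorphism[OF homeomorphism_induced[OF assms(1)]]
        funpow_induced_in assms(2))
  then show ?thesis
    by (simp add: iter_int_def)
qed

lemma dC0_induced_le:
  assumes "\<And>z. agree n (S z) (T z)" "\<forall>a\<in>X. \<forall>b\<in>X. agree n (code a) (code b) \<longrightarrow> dist a b < e"
  shows "dC0 X (induced S) (induced T) \<le> e"
proof (rule dC0_le)
  show "X \<noteq> {}"
    using decode_in by blast
  show "dist (induced S x) (induced T x) \<le> e" for x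
    using assms induced_in by (simp add: code_induced less_imp_le)
qed

lemma Dhom_induced_le:
  assumes "prefix_isometry S S'" "prefix_isometry T T'"
    and "\<And>z. agree n (S z) (T z)" "\<And>z. agree n (S' z) (T' z)"
    and "\<forall>a\<in>X. \<forall>b\<in>X. agree n (code a) (code b) \<longrightarrow> dist a b < e"
  shows "Dhom X (induced S) (induced T) \<le> e"
proof -
  have "dC0 X (inv_into X (induced S)) (inv_into X (induced T)) = dC0 X (induced S') (induced T')"
    unfolding dC0_def
    by (rule SUP_cong) (simp_all add: inv_into_homeomorphism[OF homeomorphism_induced[OF assms(1)]]
        inv_into_homeomorphism[OF homeomorphism_induced[OF assms(2)]])
  then show ?thesis
    using dC0_induced_le[OF assms(3,5)] dC0_induced_le[OF assms(4,5)] by (simp add: Dhom_def)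
qed

end

section \<open>Shadowing and instability of the odometer\<close>

context binary_coding
begin

lemma pseudo_orbit_agree_orbit:
  assumes "prefix_isometry S S'" "x \<in> pseudo_orbits X (induced S) \<delta>" "\<delta> < d"
    and "\<forall>a\<in>X. \<forall>b\<in>X. dist a b < d \<longrightarrow> agree n (code a) (code b)"
  shows "agree n (code (iter_int X (induced S) i (x 0))) (code (x i))"
proof -
  have in_X: "x j \<in> X" and jump: "dist (induced S (x j)) (x (j + 1)) \<le> \<delta>" for j
    using assms(2) by (simp_all add: pseudo_orbits_def)
  have step: "agree n (S (code (x j))) (code (x (j + 1)))" for j
  proof -
    have "dist (induced S (x j)) (x (j + 1)) < d"
      using jump[of j] assms(3) by linarith
    then have "agree n (code (induced S (x j))) (code (x (j + 1)))"
      using assms(4) induced_in in_X by blast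
    then show ?thesis
      by (simp add: code_induced)
  qed
  show ?thesis
  proof (cases "0 \<le> i")
    case True
    then show ?thesis
      using agree_funpow_pseudo_orbit(1)[where c = "\<lambda>j. code (x j)" and m = "nat i", OF assms(1) step]
      by (simp add: iter_int_induced[OF assms(1) in_X] code_funpow_induced)
  next
    case False
    then show ?thesis
      using agree_funpow_pseudo_orbit(2)[where c = "\<lambda>j. code (x j)" and m = "nat (- i)", OF assms(1) step]
      by (simp add: iter_int_induced[OF assms(1) in_X] code_funpow_induced)
  qed
qed

theorem continuous_shadowing_induced:
  assumes "prefix_isometry S S'"
  shows "continuous_shadowing X (induced S)"
  unfolding continuous_shadowing_def
proof (intro allI impI)
  fix \<epsilon> :: real
  assume "\<epsilon> > 0"
  obtain n where n: "\<forall>a\<in>X. \<forall>b\<in>X. agree n (code a) (code b) \<longrightarrow> dist a b < \<epsilon>"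
    using agree_imp_close[OF \<open>\<epsilon> > 0\<close>] by blast
  obtain d where d: "d > 0" "\<forall>a\<in>X. \<forall>b\<in>X. dist a b < d \<longrightarrow> agree n (code a) (code b)"
    using close_imp_agree by blast
  define P where "P = pseudo_orbits X (induced S) (d/2)"
  have in_X: "x i \<in> X" if "x \<in> P" for x i
    using that by (simp add: P_def pseudo_orbits_def)
  have "dist (x 0) (y 0) < e" if "x \<in> P" "y \<in> P" "dtilde x y < e" for x y e
    using dist_le_dtilde[OF bounded, of x y] in_X that by force
  then have continuous: "\<forall>x\<in>P. \<forall>e>0. \<exists>\<eta>>0. \<forall>y\<in>P. dtilde x y < \<eta> \<longrightarrow> dist (x 0) (y 0) < e"
    by blast
  have shadow: "dist (iter_int X (induced S) i (x 0)) (x i) \<le> \<epsilon>" if "x \<in> P" for x i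
  proof -
    have "iter_int X (induced S) i (x 0) \<in> X"
      by (simp add: iter_int_induced[OF assms in_X[OF that]] funpow_induced_in in_X[OF that])
    moreover have "agree n (code (iter_int X (induced S) i (x 0))) (code (x i))"
      using pseudo_orbit_agree_orbit[OF assms _ _ d(2)] that d(1) by (simp add: P_def)
    ultimately show ?thesis
      using n in_X[OF that] by (simp add: less_imp_le)
  qed
  show "\<exists>\<delta>>0. \<exists>r. (\<forall>x\<in>pseudo_orbits X (induced S) \<delta>. r x \<in> X) \<and>
      (\<forall>x\<in>pseudo_orbits X (induced S) \<delta>. \<forall>e>0. \<exists>\<eta>>0. \<forall>y\<in>pseudo_orbits X (induced S) \<delta>.
        dtilde x y < \<eta> \<longrightarrow> dist (r x) (r y) < e) \<and>
      (\<forall>x\<in>pseudo_orbits X (induced S) \<delta>. \<forall>i. dist (iter_int X (induced S) i (r x)) (x i) \<le> \<epsilon>)"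
    using d(1) in_X continuous shadow unfolding P_def
    by (intro exI[of _ "d/2"] conjI exI[of _ "\<lambda>x. x 0"]) auto
qed

theorem not_topologically_stable_induced_odometer:
  "\<not> topologically_stable X (induced odometer)"
proof
  assume "topologically_stable X (induced odometer)"
  then obtain \<delta> where "\<delta> > 0" and \<delta>: "\<forall>g\<in>homeos X. Dhom X (induced odometer) g < \<delta> \<longrightarrow>
      (\<exists>h. continuous_on X h \<and> h ` X \<subseteq> X \<and> dC0 X h id < 1
        \<and> (\<forall>x\<in>X. h (g x) = induced odometer (h x)))"
    unfolding topologically_stable_def by (meson zero_less_one)
  obtain n where n: "\<forall>a\<in>X. \<forall>b\<in>X. agree n (code a) (code b) \<longrightarrow> dist a b < \<delta>/2"
    using agree_imp_close \<open>\<delta> > 0\<close> by (meson half_gt_zero)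
  let ?g = "induced (odometer_upto n)"
  have "?g \<in> homeos X"
    using homeomorphism_induced[OF prefix_isometry_odometer_upto] by (auto simp: homeos_def)
  moreover have "Dhom X (induced odometer) ?g \<le> \<delta>/2"
    by (rule Dhom_induced_le[OF prefix_isometry_odometer prefix_isometry_odometer_upto _ _ n])
      (simp_all add: odometer_upto_def odometer_upto_inv_def)
  then have "Dhom X (induced odometer) ?g < \<delta>"
    using \<open>\<delta> > 0\<close> by linarith
  ultimately obtain h where h: "h ` X \<subseteq> X" "\<forall>x\<in>X. h (?g x) = induced odometer (h x)"
    using \<delta> by blast
  define x where "x = decode (\<lambda>_. False)"
  have "x \<in> X"
    by (simp add: x_def decode_in)
  then have "(?g ^^ 2 ^ n) x = x"
    by (simp add: funpow_induced_fixed_iff odometer_upto_periodic)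
  moreover have "h ((?g ^^ 2 ^ n) x) = (induced odometer ^^ 2 ^ n) (h x)"
    by (rule funpow_semiconj) (use h(2) induced_in \<open>x \<in> X\<close> in auto)
  ultimately have "(induced odometer ^^ 2 ^ n) (h x) = h x"
    by simp
  then have "(odometer ^^ 2 ^ n) (code (h x)) = code (h x)"
    using h(1) \<open>x \<in> X\<close> by (auto simp: funpow_induced_fixed_iff)
  then show False
    using odometer_not_periodic[of "2 ^ n"] by simp
qed

end

theorem corollary1p1:
  fixes X :: "'a::metric_space set"
  assumes "cantor_space X"
  shows "\<exists>f\<in>homeos X. continuous_shadowing X f \<and> \<not> topologically_stable X f"
proof -
  obtain code where "binary_coding X code"
    using cantor_space_binary_coding[OF assms] .
  then interpret binary_coding X code .
  have "induced odometer \<in> homeos X"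
    using homeomorphism_induced[OF prefix_isometry_odometer] by (auto simp: homeos_def)
  then show ?thesis
    using continuous_shadowing_induced[OF prefix_isometry_odometer]
      not_topologically_stable_induced_odometer by blast
qed

end
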